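(* Let $Q=\exists x_1\forall x_2\exists x_3\cdots\forall x_n\,F$ where $n\ge 2$ is even, the quantifiers strictly alternate starting with $\exists$, and $F=F_1\wedge\cdots\wedge F_m$ with $F_i=(l_{i,1}\vee l_{i,2}\vee l_{i,3})$, each literal $l_{i,j}$ being $x_l$ or $\overline{x_l}$ for some $l\in\{1,\dots,n\}$. Construct the graph-game instance $(G,C,s,R)$ as follows. For each $i=1,\dots,n$ add vertices $a_i,b_i,c_i,d_i,e_i,f_i,g_i$ and edges $(a_i,b_i),(a_i,c_i),(b_i,e_i),(c_i,f_i),(e_i,d_i),(f_i,d_i),(d_i,g_i)$; add edges $(g_i,a_{i+1})$ for $i=1,\dots,n-1$; add a vertex $g_0$ and edge $(g_0,a_1)$. Add vertices $x_i,y_i,z_i$ ($i=1,\dots,m$) and $w_{i,j}$ ($i=1,\dots,m$, $j=1,2,3$) with edges $(x_i,y_i),(y_i,z_i),(z_i,w_{i,1}),(w_{i,1},w_{i,2}),(w_{i,2},w_{i,3})$ for all $i$, $(x_i,x_{i+1})$ for $i=1,\dots,m-1$, and $(g_n,x_1)$. Let $C=\{g_0,\dots,g_{n-1}\}\cup\{z_1,\dots,z_m\}$, $s=g_0$, and let $R$ consist of the pairs $(w_{i,j},(b_l,e_l))$ whenever $l_{i,j}=x_l$ and $(w_{i,j},(c_l,f_l))$ whenever $l_{i,j}=\overline{x_l}$. Then the $\exists$-player has a winning strategy in the graph game on $(G,C,s,R)$ if and only if $Q$ is true.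
   Context: The graph game: an instance consists of a finite directed graph $G$, a set $C\subseteq V(G)$, a vertex $s\in C$, and a relation $R\subseteq V(G)\times E(G)$ ("$v$ points to $e$" if $(v,e)\in R$). At any moment $E(G)$ is the current edge set (edges are deleted during play) and $R^{-1}(E(G))$ is the set of vertices pointing to some edge currently in $E(G)$. The $\exists$-player and $\forall$-player move alternately, $\exists$ first; there is a unique active vertex, initially $s$. A move from active vertex $u$: the current player chooses $v\in C\cup R^{-1}(E(G))$ and a directed path $P$ in the current graph from $u$ to $v$ whose internal vertices all lie outside $C\cup R^{-1}(E(G))$; the edges of $P$ are deleted, $v$ becomes active, and the turn passes. A player who cannot move loses; a player who moves to a vertex of $R^{-1}(E(G))$ wins. *)

theory Defs
  imports Main
begin

definition pointing :: "('v \<times> ('v \<times> 'v)) set \<Rightarrow> ('v \<times> 'v) set \<Rightarrow> 'v set" where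
  "pointing R E = {v. \<exists>e\<in>E. (v, e) \<in> R}"

definition path_edges :: "'v list \<Rightarrow> ('v \<times> 'v) set" where
  "path_edges p = set (zip p (tl p))"

definition is_move :: "'v set \<Rightarrow> ('v \<times> ('v \<times> 'v)) set \<Rightarrow> ('v \<times> 'v) set \<Rightarrow> 'v \<Rightarrow> 'v \<Rightarrow> 'v list \<Rightarrow> bool" where
  "is_move C R E u v p \<longleftrightarrow>
     2 \<le> length p \<and> hd p = u \<and> last p = v \<and> distinct p \<and> path_edges p \<subseteq> E \<and>
     v \<in> C \<union> pointing R E \<and>
     (\<forall>x\<in>set (butlast (tl p)). x \<notin> C \<union> pointing R E)"

text \<open>wins C R E u: the player to move in position (current edge set E, active vertex u)
  has a winning strategy; loses C R E u: the player to move has no way to avoid losing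
  (the opponent has a winning strategy). Since each move deletes at least one edge and
  the graph is finite, every play is finite, so these least fixed points characterize
  the existence of winning strategies.\<close>
inductive wins :: "'v set \<Rightarrow> ('v \<times> ('v \<times> 'v)) set \<Rightarrow> ('v \<times> 'v) set \<Rightarrow> 'v \<Rightarrow> bool"
  and loses :: "'v set \<Rightarrow> ('v \<times> ('v \<times> 'v)) set \<Rightarrow> ('v \<times> 'v) set \<Rightarrow> 'v \<Rightarrow> bool"
  for C :: "'v set" and R :: "('v \<times> ('v \<times> 'v)) set" where
  win_now: "is_move C R E u v p \<Longrightarrow> v \<in> pointing R E \<Longrightarrow> wins C R E u"
| win_later: "is_move C R E u v p \<Longrightarrow> loses C R (E - path_edges p) v \<Longrightarrow> wins C R E u"
| lose: "(\<And>v p. is_move C R E u v p \<Longrightarrow> v \<notin> pointing R E \<and> wins C R (E - path_edges p) v)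
         \<Longrightarrow> loses C R E u"

definition exists_player_wins :: "('v \<times> 'v) set \<Rightarrow> 'v set \<Rightarrow> 'v \<Rightarrow> ('v \<times> ('v \<times> 'v)) set \<Rightarrow> bool" where
  "exists_player_wins E C s R = wins C R E s"

text \<open>A literal is (l, True) for x_l and (l, False) for the negation of x_l.\<close>
definition lit_val :: "(nat \<Rightarrow> bool) \<Rightarrow> nat \<times> bool \<Rightarrow> bool" where
  "lit_val \<sigma> lt = (if snd lt then \<sigma> (fst lt) else \<not> \<sigma> (fst lt))"

definition cnf_val :: "nat \<Rightarrow> (nat \<Rightarrow> nat \<Rightarrow> nat \<times> bool) \<Rightarrow> (nat \<Rightarrow> bool) \<Rightarrow> bool" where
  "cnf_val m l \<sigma> \<longleftrightarrow> (\<forall>i\<in>{1..m}. \<exists>j\<in>{1..3}. lit_val \<sigma> (l i j))"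

text \<open>qsat r k \<sigma> M: truth of Q_k x_k Q_{k+1} x_{k+1} ... Q_{k+r-1} x_{k+r-1}. M
  under partial assignment \<sigma>, where Q_j = \<exists> for odd j and \<forall> for even j.\<close>
fun qsat :: "nat \<Rightarrow> nat \<Rightarrow> (nat \<Rightarrow> bool) \<Rightarrow> ((nat \<Rightarrow> bool) \<Rightarrow> bool) \<Rightarrow> bool" where
  "qsat 0 k \<sigma> M = M \<sigma>"
| "qsat (Suc r) k \<sigma> M =
     (if odd k then (\<exists>b. qsat r (Suc k) (\<sigma>(k := b)) M)
      else (\<forall>b. qsat r (Suc k) (\<sigma>(k := b)) M))"

definition qbf_true :: "nat \<Rightarrow> nat \<Rightarrow> (nat \<Rightarrow> nat \<Rightarrow> nat \<times> bool) \<Rightarrow> bool" where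
  "qbf_true n m l = qsat n 1 (\<lambda>_. False) (cnf_val m l)"

datatype vtx = VA nat | VB nat | VC nat | VD nat | VE nat | VF nat | VG nat
  | VX nat | VY nat | VZ nat | VW nat nat

definition red_vertices :: "nat \<Rightarrow> nat \<Rightarrow> vtx set" where
  "red_vertices n m =
     (\<Union>i\<in>{1..n}. {VA i, VB i, VC i, VD i, VE i, VF i, VG i}) \<union> {VG 0} \<union>
     (\<Union>i\<in>{1..m}. {VX i, VY i, VZ i, VW i 1, VW i 2, VW i 3})"

definition red_edges :: "nat \<Rightarrow> nat \<Rightarrow> (vtx \<times> vtx) set" where
  "red_edges n m =
     (\<Union>i\<in>{1..n}. {(VA i, VB i), (VA i, VC i), (VB i, VE i), (VC i, VF i),
                    (VE i, VD i), (VF i, VD i), (VD i, VG i)}) \<union>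
     {(VG i, VA (Suc i)) | i. 1 \<le> i \<and> i < n} \<union>
     {(VG 0, VA 1)} \<union>
     (\<Union>i\<in>{1..m}. {(VX i, VY i), (VY i, VZ i), (VZ i, VW i 1), (VW i 1, VW i 2), (VW i 2, VW i 3)}) \<union>
     {(VX i, VX (Suc i)) | i. 1 \<le> i \<and> i < m} \<union>
     {(VG n, VX 1)}"

definition red_C :: "nat \<Rightarrow> nat \<Rightarrow> vtx set" where
  "red_C n m = {VG i | i. i < n} \<union> {VZ i | i. 1 \<le> i \<and> i \<le> m}"

definition red_s :: vtx where
  "red_s = VG 0"

definition red_R :: "nat \<Rightarrow> (nat \<Rightarrow> nat \<Rightarrow> nat \<times> bool) \<Rightarrow> (vtx \<times> (vtx \<times> vtx)) set" where
  "red_R m l =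
     {(VW i j, (VB k, VE k)) | i j k. i \<in> {1..m} \<and> j \<in> {1..3} \<and> l i j = (k, True)} \<union>
     {(VW i j, (VC k, VF k)) | i j k. i \<in> {1..m} \<and> j \<in> {1..3} \<and> l i j = (k, False)}"

end

theory Submission
  imports Defs
begin

text \<open>
  The game on the constructed instance is played in rounds. Whenever g_k (k < n) is
  active, the player to move must walk through the gadget of x_{k+1}; the branch he
  takes deletes the edge of one literal, and the surviving edge records the value
  chosen for x_{k+1}. The moves thus alternate exactly like the quantifiers of Q. In
  the last round the walk continues from g_n along the x-chain down to some z_j, so the
  player owning x_n (the universal one) also selects a clause; the opponent then wins
  at once iff some w_{j,t} still points to an edge, i.e. iff clause j is satisfied.
\<close>

lemma path_edges_append:
  "path_edges (xs @ y # ys) = path_edges (xs @ [y]) \<union> path_edges (y # ys)"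
proof (induction xs)
  case Nil
  then show ?case by (simp add: path_edges_def)
next
  case (Cons a xs)
  then show ?case by (cases xs) (auto simp: path_edges_def)
qed

lemma path_edges_subset: "path_edges p \<subseteq> set p \<times> set p"
  unfolding path_edges_def by (auto dest: set_zip_leftD set_zip_rightD intro: list.set_sel)

lemma is_move_Cons:
  "is_move C R E u v (u # s # rest) \<longleftrightarrow>
   (u, s) \<in> E \<and> u \<notin> set (s # rest) \<and>
   (if rest = [] then v = s \<and> s \<in> C \<union> pointing R E
    else s \<notin> C \<union> pointing R E \<and> is_move C R E s v (s # rest))"
  by (cases rest) (auto simp: is_move_def path_edges_def)

lemma move_first_step:
  assumes "is_move C R E u v p"
  obtains (stop) s where "p = [u, s]" "v = s" "(u, s) \<in> E" "s \<in> C \<union> pointing R E"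
  | (pass) s q where "p = u # s # q" "q \<noteq> []" "(u, s) \<in> E" "s \<notin> C \<union> pointing R E"
      "is_move C R E s v (s # q)"
proof -
  obtain s q where p: "p = u # s # q"
    using assms unfolding is_move_def by (cases p; cases "tl p") auto
  show thesis
    using assms that unfolding p is_move_Cons by (cases "q = []") auto
qed

lemma move_forced_pass:
  assumes "is_move C R E u v p" "\<And>s. (u, s) \<in> E \<Longrightarrow> s = w" "w \<notin> C \<union> pointing R E"
  shows "\<exists>q. p = u # q \<and> is_move C R E w v q"
  using assms(1) by (cases rule: move_first_step) (use assms(2,3) in auto)

lemma move_forced_stop:
  assumes "is_move C R E u v p" "\<And>s. (u, s) \<in> E \<Longrightarrow> s = w" "w \<in> C"
  shows "p = [u, w] \<and> v = w"
  using assms(1) by (cases rule: move_first_step) (use assms(2,3) in auto)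

lemma move_reaches:
  assumes "is_move C R E u v p"
  shows "(u, v) \<in> E\<^sup>+"
  using assms
proof (induction p arbitrary: u)
  case Nil
  then show ?case by (simp add: is_move_def)
next
  case (Cons x p)
  from Cons.prems show ?case
  proof (cases rule: move_first_step)
    case (stop s)
    then show ?thesis by auto
  next
    case (pass s q)
    then show ?thesis using Cons.IH[of s] by auto
  qed
qed

lemma trancl_closed:
  assumes "(u, v) \<in> E\<^sup>+" "\<And>y. (u, y) \<in> E \<Longrightarrow> y \<in> S" "\<And>x y. x \<in> S \<Longrightarrow> (x, y) \<in> E \<Longrightarrow> y \<in> S"
  shows "v \<in> S"
  using assms(1) by (induction rule: trancl_induct) (use assms(2,3) in blast)+

definition decides :: "bool \<Rightarrow> 'v set \<Rightarrow> ('v \<times> ('v \<times> 'v)) set \<Rightarrow> ('v \<times> 'v) set \<Rightarrow> 'v \<Rightarrow> bool" where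
  "decides P C R E u \<longleftrightarrow> (P \<longrightarrow> wins C R E u) \<and> (\<not> P \<longrightarrow> loses C R E u)"

lemma wins_not_loses: "wins C R E u \<Longrightarrow> \<not> loses C R E u"
  and "loses C R E u \<Longrightarrow> \<not> wins C R E u"
proof (induction rule: wins_loses.inducts)
  case (win_now E u v p)
  then show ?case by (auto elim: loses.cases)
next
  case (win_later E u v p)
  then show ?case by (auto elim: loses.cases)
next
  case (lose E u)
  then show ?case by (auto elim: wins.cases)
qed

lemma decides_wins_iff: "decides P C R E u \<Longrightarrow> wins C R E u \<longleftrightarrow> P"
  unfolding decides_def by (metis wins_not_loses)

locale reduction =
  fixes n m :: nat and l :: "nat \<Rightarrow> nat \<Rightarrow> nat \<times> bool"
  assumes n_ge_2: "2 \<le> n" and n_even: "even n" and m_pos: "1 \<le> m"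
    and lit_range: "\<forall>i\<in>{1..m}. \<forall>j\<in>{1..3}. fst (l i j) \<in> {1..n}"
begin

abbreviation "E0 \<equiv> red_edges n m"
abbreviation "CC \<equiv> red_C n m"
abbreviation "RR \<equiv> red_R m l"

lemma in_C [simp]: "VG i \<in> CC \<longleftrightarrow> i < n" "VZ i \<in> CC \<longleftrightarrow> 1 \<le> i \<and> i \<le> m"
  "VA i \<notin> CC" "VB i \<notin> CC" "VC i \<notin> CC" "VD i \<notin> CC" "VE i \<notin> CC" "VF i \<notin> CC"
  "VX i \<notin> CC" "VY i \<notin> CC" "VW i j \<notin> CC"
  by (auto simp: red_C_def)

lemma not_pointing [simp]: "VG i \<notin> pointing RR E" "VZ i \<notin> pointing RR E"
  "VA i \<notin> pointing RR E" "VB i \<notin> pointing RR E" "VC i \<notin> pointing RR E" "VD i \<notin> pointing RR E"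
  "VE i \<notin> pointing RR E" "VF i \<notin> pointing RR E" "VX i \<notin> pointing RR E" "VY i \<notin> pointing RR E"
  by (auto simp: pointing_def red_R_def)

lemma pointing_W: "VW i t \<in> pointing RR E \<longleftrightarrow> 1 \<le> i \<and> i \<le> m \<and> 1 \<le> t \<and> t \<le> 3 \<and>
   (if snd (l i t) then (VB (fst (l i t)), VE (fst (l i t))) \<in> E
    else (VC (fst (l i t)), VF (fst (l i t))) \<in> E)"
  by (cases "l i t") (auto simp: pointing_def red_R_def)

lemma successors:
  assumes "E \<subseteq> E0"
  shows
  "(VG k, s) \<in> E \<Longrightarrow> (k < n \<and> s = VA (Suc k)) \<or> (k = n \<and> s = VX 1)"
  "(VA i, s) \<in> E \<Longrightarrow> s = VB i \<or> s = VC i"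
  "(VB i, s) \<in> E \<Longrightarrow> s = VE i"
  "(VC i, s) \<in> E \<Longrightarrow> s = VF i"
  "(VE i, s) \<in> E \<Longrightarrow> s = VD i"
  "(VF i, s) \<in> E \<Longrightarrow> s = VD i"
  "(VD i, s) \<in> E \<Longrightarrow> s = VG i"
  "(VX i, s) \<in> E \<Longrightarrow> s = VY i \<or> (s = VX (Suc i) \<and> i < m)"
  "(VY i, s) \<in> E \<Longrightarrow> s = VZ i"
  "(VZ i, s) \<in> E \<Longrightarrow> s = VW i 1"
  "(VW i t, s) \<in> E \<Longrightarrow> (t = 1 \<and> s = VW i 2) \<or> (t = 2 \<and> s = VW i 3)"
  using assms n_ge_2 by (auto simp: red_edges_def)

definition gadget_edges :: "nat \<Rightarrow> (vtx \<times> vtx) set" where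
  "gadget_edges i = {(VA i, VB i), (VA i, VC i), (VB i, VE i), (VC i, VF i),
                     (VE i, VD i), (VF i, VD i), (VD i, VG i)}"

definition clause_edges :: "(vtx \<times> vtx) set" where
  "clause_edges =
     (\<Union>i\<in>{1..m}. {(VX i, VY i), (VY i, VZ i), (VZ i, VW i 1), (VW i 1, VW i 2), (VW i 2, VW i 3)}) \<union>
     {(VX i, VX (Suc i)) | i. 1 \<le> i \<and> i < m} \<union> {(VG n, VX 1)}"

text \<open>round_inv k sigma E: the edge set E when g_k is active after x_1..x_k have been
  set to sigma: later gadgets and connectors and the clause part are untouched, and in the
  gadget of each assigned x_i exactly the edge of the true literal survives.\<close>
definition round_inv :: "nat \<Rightarrow> (nat \<Rightarrow> bool) \<Rightarrow> (vtx \<times> vtx) set \<Rightarrow> bool" where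
  "round_inv k \<sigma> E \<longleftrightarrow> E \<subseteq> E0 \<and> (\<forall>i. k < i \<longrightarrow> i \<le> n \<longrightarrow> gadget_edges i \<subseteq> E) \<and>
     (\<forall>i. k \<le> i \<longrightarrow> i < n \<longrightarrow> (VG i, VA (Suc i)) \<in> E) \<and> clause_edges \<subseteq> E \<and>
     (\<forall>i. 1 \<le> i \<longrightarrow> i \<le> k \<longrightarrow> ((VB i, VE i) \<in> E \<longleftrightarrow> \<sigma> i) \<and> ((VC i, VF i) \<in> E \<longleftrightarrow> \<not> \<sigma> i))"

text \<open>The walk through the gadget of x_{k+1} that sets x_{k+1} := b: it deletes the
  edge of the literal made false, so that the edge of the true literal survives.\<close>
definition gadget_path :: "nat \<Rightarrow> bool \<Rightarrow> vtx list" where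
  "gadget_path k b = [VG k, VA (Suc k), if b then VC (Suc k) else VB (Suc k),
     if b then VF (Suc k) else VE (Suc k), VD (Suc k)]"

definition round_path :: "nat \<Rightarrow> bool \<Rightarrow> vtx list" where
  "round_path k b = gadget_path k b @ [VG (Suc k)]"

definition chain_path :: "nat \<Rightarrow> nat \<Rightarrow> vtx list" where
  "chain_path i j = map VX [i..<Suc j] @ [VY j, VZ j]"

lemma round_inv_initial: "round_inv 0 \<sigma> E0"
  unfolding round_inv_def gadget_edges_def clause_edges_def by (auto simp: red_edges_def)

lemma path_edges_round_path: "path_edges (round_path k b) =
  {(VG k, VA (Suc k)), (VA (Suc k), if b then VC (Suc k) else VB (Suc k)),
   (if b then VC (Suc k) else VB (Suc k), if b then VF (Suc k) else VE (Suc k)),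
   (if b then VF (Suc k) else VE (Suc k), VD (Suc k)), (VD (Suc k), VG (Suc k))}"
  by (simp add: path_edges_def round_path_def gadget_path_def)

lemma round_inv_step:
  assumes "k < n" "round_inv k \<sigma> E"
  shows "round_inv (Suc k) (\<sigma>(Suc k := b)) (E - path_edges (round_path k b))"
  using assms unfolding round_inv_def path_edges_round_path
  by (auto simp: gadget_edges_def clause_edges_def le_Suc_eq)

lemma chain_moves:
  assumes "1 \<le> i" "i \<le> m" "E \<subseteq> E0" "is_move CC RR E (VX i) v p"
  shows "\<exists>j. i \<le> j \<and> j \<le> m \<and> p = chain_path i j \<and> v = VZ j"
  using assms
proof (induction "m - i" arbitrary: i p rule: less_induct)
  case less
  note succ = successors[OF less.prems(3)]
  from less.prems(4) show ?case
  proof (cases rule: move_first_step)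
    case (stop s)
    then show ?thesis using succ(8)[of i s] by auto
  next
    case (pass s q)
    from succ(8) pass(3) consider "s = VY i" | "s = VX (Suc i)" "i < m" by blast
    then show ?thesis
    proof cases
      case 1
      then have "s # q = [VY i, VZ i] \<and> v = VZ i"
        using move_forced_stop[OF pass(5)] succ(9) less.prems(1,2) by auto
      then show ?thesis using pass(1) 1 less.prems(2) by (auto simp: chain_path_def)
    next
      case 2
      then have "m - Suc i < m - i" by arith
      then obtain j where j: "Suc i \<le> j" "j \<le> m" "s # q = chain_path (Suc i) j" "v = VZ j"
        using less.hyps[of "Suc i" "s # q"] pass 2 less.prems by auto
      have "p = chain_path i j"
        using pass(1) 2 j(1,3) by (simp add: chain_path_def upt_conv_Cons)
      then show ?thesis using j by auto
    qed
  qed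
qed

lemma chain_move:
  assumes "1 \<le> i" "i \<le> j" "j \<le> m" "clause_edges \<subseteq> E"
  shows "is_move CC RR E (VX i) (VZ j) (chain_path i j)"
  using assms
proof (induction "j - i" arbitrary: i)
  case 0
  then show ?case by (auto simp: chain_path_def is_move_Cons clause_edges_def)
next
  case (Suc d)
  then have tail: "is_move CC RR E (VX (Suc i)) (VZ j) (chain_path (Suc i) j)" by auto
  have "i < j" using Suc.hyps by arith
  let ?rest = "map VX [Suc (Suc i)..<Suc j] @ [VY j, VZ j]"
  have rest: "chain_path (Suc i) j = VX (Suc i) # ?rest" "chain_path i j = VX i # VX (Suc i) # ?rest"
    using \<open>i < j\<close> by (simp_all add: chain_path_def upt_conv_Cons)
  have "VX i \<notin> set (chain_path (Suc i) j)" by (auto simp: chain_path_def)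
  then show ?case using tail Suc.prems \<open>i < j\<close> unfolding rest
    by (auto simp: is_move_Cons clause_edges_def)
qed

lemma gadget_moves:
  assumes E: "E \<subseteq> E0" and mv: "is_move CC RR E (VA i) v p"
  obtains b q where "p = [VA i, if b then VC i else VB i, if b then VF i else VE i] @ q"
    "is_move CC RR E (VD i) v q"
proof -
  note succ = successors[OF E]
  from mv obtain s q where p: "p = VA i # s # q" "(VA i, s) \<in> E" "is_move CC RR E s v (s # q)"
  proof (cases rule: move_first_step)
    case (stop s)
    then show ?thesis using succ(2)[of i s] by auto
  qed auto
  define b where "b \<longleftrightarrow> s = VC i"
  let ?t = "if b then VF i else VE i"
  have s: "s = (if b then VC i else VB i)" using succ(2)[of i s] p(2) b_def by auto
  have "\<And>x. (s, x) \<in> E \<Longrightarrow> x = ?t" "?t \<notin> CC \<union> pointing RR E"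
    using s succ(3,4) by auto
  then obtain q' where q': "s # q = s # q'" "is_move CC RR E ?t v q'"
    using move_forced_pass[OF p(3)] by blast
  have "\<And>x. (?t, x) \<in> E \<Longrightarrow> x = VD i" using succ(5,6) by (cases b) auto
  then obtain q'' where "q' = ?t # q''" "is_move CC RR E (VD i) v q''"
    using move_forced_pass[OF q'(2), of "VD i"] by auto
  then show thesis using that[of b q''] p(1) q'(1) s by simp
qed

lemma round_moves:
  assumes k: "k < n" and E: "E \<subseteq> E0" and mv: "is_move CC RR E (VG k) v p"
  obtains (inner) b where "Suc k < n" "p = round_path k b" "v = VG (Suc k)"
  | (last) b j where "Suc k = n" "1 \<le> j" "j \<le> m"
      "p = gadget_path k b @ VG n # chain_path 1 j" "v = VZ j"
proof -
  note succ = successors[OF E]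
  obtain q1 where q1: "p = VG k # q1" "is_move CC RR E (VA (Suc k)) v q1"
    using move_forced_pass[OF mv, of "VA (Suc k)"] succ(1)[of k] k by auto
  obtain b q2 where q2: "q1 = [VA (Suc k), if b then VC (Suc k) else VB (Suc k),
      if b then VF (Suc k) else VE (Suc k)] @ q2" "is_move CC RR E (VD (Suc k)) v q2"
    using gadget_moves[OF E q1(2)] by blast
  show thesis
  proof (cases "Suc k < n")
    case True
    then have "q2 = [VD (Suc k), VG (Suc k)] \<and> v = VG (Suc k)"
      using move_forced_stop[OF q2(2), of "VG (Suc k)"] succ(7) by auto
    then show thesis using inner[of b] True q1(1) q2(1) by (simp add: round_path_def gadget_path_def)
  next
    case False
    then have kn: "Suc k = n" using k by simp
    obtain q3 where q3: "q2 = VD n # q3" "is_move CC RR E (VG n) v q3"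
      using move_forced_pass[OF q2(2), of "VG n"] succ(7) kn by auto
    obtain q4 where q4: "q3 = VG n # q4" "is_move CC RR E (VX 1) v q4"
      using move_forced_pass[OF q3(2), of "VX 1"] succ(1)[of n] by auto
    obtain j where "1 \<le> j" "j \<le> m" "q4 = chain_path 1 j" "v = VZ j"
      using chain_moves[OF _ m_pos E q4(2)] by auto
    then show thesis
      using last[of j b] kn q1(1) q2(1) q3(1) q4(1) by (simp add: gadget_path_def)
  qed
qed

lemma round_move:
  assumes "Suc k < n" "round_inv k \<sigma> E"
  shows "is_move CC RR E (VG k) (VG (Suc k)) (round_path k b)"
  using assms unfolding round_inv_def gadget_edges_def round_path_def gadget_path_def
  by (auto simp: is_move_Cons)

lemma last_round_move:
  assumes kn: "Suc k = n" and inv: "round_inv k \<sigma> E" and j: "1 \<le> j" "j \<le> m"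
  shows "is_move CC RR E (VG k) (VZ j) (gadget_path k b @ VG n # chain_path 1 j)"
proof -
  have edges: "clause_edges \<subseteq> E" "(VG k, VA n) \<in> E" "gadget_edges n \<subseteq> E"
    using inv kn by (auto simp: round_inv_def)
  define rest where "rest = map VX [2..<Suc j] @ [VY j, VZ j]"
  have chain: "chain_path 1 j = VX 1 # rest"
    using j by (simp add: rest_def chain_path_def upt_conv_Cons numeral_2_eq_2)
  have rest: "rest \<noteq> []" "set rest \<subseteq> range VX \<union> {VY j, VZ j}"
    by (auto simp: rest_def)
  have "is_move CC RR E (VX 1) (VZ j) (VX 1 # rest)"
    using chain_move[OF order.refl j edges(1)] unfolding chain .
  moreover have "(VG n, VX 1) \<in> E" using edges(1) by (auto simp: clause_edges_def)
  ultimately show ?thesis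
    using edges(2,3) kn rest unfolding chain gadget_path_def gadget_edges_def
    by (auto simp: is_move_Cons)
qed

definition clause_inv :: "(nat \<Rightarrow> bool) \<Rightarrow> (vtx \<times> vtx) set \<Rightarrow> nat \<Rightarrow> bool" where
  "clause_inv \<sigma> E j \<longleftrightarrow> E \<subseteq> E0 \<and> {(VZ j, VW j 1), (VW j 1, VW j 2), (VW j 2, VW j 3)} \<subseteq> E \<and>
     (\<forall>t\<in>{1..3}. VW j t \<in> pointing RR E \<longleftrightarrow> lit_val \<sigma> (l j t))"

lemma clause_moves:
  assumes "E \<subseteq> E0" "is_move CC RR E (VZ j) v p"
  shows "v \<in> {VW j 1, VW j 2, VW j 3}"
  using move_reaches[OF assms(2)]
proof (rule trancl_closed)
  show "y \<in> {VW j 1, VW j 2, VW j 3}" if "(VZ j, y) \<in> E" for y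
    using successors(10)[OF assms(1) that] by simp
  show "y \<in> {VW j 1, VW j 2, VW j 3}" if "x \<in> {VW j 1, VW j 2, VW j 3}" "(x, y) \<in> E" for x y
    using that successors(11)[OF assms(1)] by auto
qed

text \<open>The player to move at z_j wins iff clause j is satisfied: then the walk to the
  first true literal reaches a pointing vertex; otherwise no move is possible.\<close>
lemma clause_value:
  assumes inv: "clause_inv \<sigma> E j"
  shows "decides (\<exists>t\<in>{1..3}. lit_val \<sigma> (l j t)) CC RR E (VZ j)"
  unfolding decides_def
proof (intro conjI impI)
  have pt: "\<And>t. t \<in> {1..3} \<Longrightarrow> VW j t \<in> pointing RR E \<longleftrightarrow> lit_val \<sigma> (l j t)"
    using inv by (auto simp: clause_inv_def)
  assume "\<exists>t\<in>{1..3}. lit_val \<sigma> (l j t)"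
  then obtain t where t: "t \<in> {1..3}" "lit_val \<sigma> (l j t)"
    and first: "\<forall>t'<t. \<not> (t' \<in> {1..3} \<and> lit_val \<sigma> (l j t'))"
    using exists_least_iff[of "\<lambda>t. t \<in> {1..3} \<and> lit_val \<sigma> (l j t)"] by blast
  have before: "VW j t' \<notin> pointing RR E" if "1 \<le> t'" "t' < t" for t'
    using first pt that t(1) by auto
  have edges: "(VZ j, VW j 1) \<in> E" "(VW j 1, VW j 2) \<in> E" "(VW j 2, VW j 3) \<in> E"
    using inv by (auto simp: clause_inv_def)
  from t(1) have "t = 1 \<or> t = 2 \<or> t = 3" by auto
  then have "is_move CC RR E (VZ j) (VW j t) (VZ j # take t [VW j 1, VW j 2, VW j 3])"
    using before edges pt t by (elim disjE) (auto simp: is_move_Cons)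
  then show "wins CC RR E (VZ j)" using pt t by (intro win_now) auto
next
  assume none: "\<not> (\<exists>t\<in>{1..3}. lit_val \<sigma> (l j t))"
  show "loses CC RR E (VZ j)"
  proof (rule lose)
    fix v p assume mv: "is_move CC RR E (VZ j) v p"
    then have "v \<in> {VW j 1, VW j 2, VW j 3}" using clause_moves inv by (auto simp: clause_inv_def)
    moreover have "v \<in> pointing RR E" using mv calculation by (auto simp: is_move_def)
    ultimately show "v \<notin> pointing RR E \<and> wins CC RR (E - path_edges p) v"
      using none inv by (auto simp: clause_inv_def)
  qed
qed

text \<open>After the last round the clause position satisfies its invariant for the
  complete assignment, since the walk to z_j touches no literal edge.\<close>
lemma last_round_position:
  assumes kn: "Suc k = n" and inv: "round_inv k \<sigma> E" and j: "1 \<le> j" "j \<le> m"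
  shows "clause_inv (\<sigma>(n := b)) (E - path_edges (gadget_path k b @ VG n # chain_path 1 j)) j"
proof -
  let ?E' = "E - path_edges (round_path k b)" and ?\<sigma>' = "\<sigma>(n := b)"
  let ?P = "VG n # chain_path 1 j"
  have inv': "round_inv n ?\<sigma>' ?E'" using round_inv_step[OF _ inv, of b] kn by simp
  have split: "E - path_edges (gadget_path k b @ ?P) = ?E' - path_edges ?P"
    using path_edges_append[of "gadget_path k b" "VG n" "chain_path 1 j"] kn
    by (auto simp: round_path_def)
  have avoid: "VW a c \<notin> set ?P" "VB a \<notin> set ?P" "VC a \<notin> set ?P" for a c
    by (auto simp: chain_path_def)
  then have kept: "(VZ j, VW j c) \<notin> path_edges ?P" "(VW j a, VW j c) \<notin> path_edges ?P"
      "(VB a, VE a) \<notin> path_edges ?P" "(VC a, VF a) \<notin> path_edges ?P" for a c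
    using path_edges_subset[of ?P] by blast+
  have "{(VZ j, VW j 1), (VW j 1, VW j 2), (VW j 2, VW j 3)} \<subseteq> clause_edges"
    using j by (auto simp: clause_edges_def)
  then have "{(VZ j, VW j 1), (VW j 1, VW j 2), (VW j 2, VW j 3)} \<subseteq> ?E'"
    using inv' unfolding round_inv_def by blast
  moreover have "VW j t \<in> pointing RR (?E' - path_edges ?P) \<longleftrightarrow> lit_val ?\<sigma>' (l j t)"
    if t: "t \<in> {1..3}" for t
  proof -
    obtain a c where lt: "l j t = (a, c)" by (cases "l j t")
    have "1 \<le> a" "a \<le> n" using lit_range j t lt by force+
    then have "((VB a, VE a) \<in> ?E' \<longleftrightarrow> ?\<sigma>' a) \<and> ((VC a, VF a) \<in> ?E' \<longleftrightarrow> \<not> ?\<sigma>' a)"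
      using inv' by (auto simp: round_inv_def)
    then show ?thesis using kept lt j t by (auto simp: pointing_W lit_val_def)
  qed
  moreover have "?E' \<subseteq> E0" using inv' by (auto simp: round_inv_def)
  ultimately show ?thesis unfolding split clause_inv_def using kept by auto
qed

text \<open>qwin k sigma: the quantifier player owning x_{k+1} (the existential one iff k is
  even) wins the evaluation of the remaining quantified formula under sigma, i.e. the suffix
  is true resp. false for him; in the graph game this player is to move at g_k.\<close>
definition qwin :: "nat \<Rightarrow> (nat \<Rightarrow> bool) \<Rightarrow> bool" where
  "qwin k \<sigma> \<longleftrightarrow> (if even k then qsat (n - k) (Suc k) \<sigma> (cnf_val m l)
                   else \<not> qsat (n - k) (Suc k) \<sigma> (cnf_val m l))"

lemma qwin_initial: "qwin 0 (\<lambda>_. False) \<longleftrightarrow> qbf_true n m l"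
  by (simp add: qwin_def qbf_true_def)

lemma qwin_step: "Suc k < n \<Longrightarrow> qwin k \<sigma> \<longleftrightarrow> (\<exists>b. \<not> qwin (Suc k) (\<sigma>(Suc k := b)))"
proof -
  assume "Suc k < n"
  then have "n - k = Suc (n - Suc k)" by simp
  then show ?thesis unfolding qwin_def by (cases "even k") auto
qed

lemma qwin_last: "Suc k = n \<Longrightarrow> qwin k \<sigma> \<longleftrightarrow> (\<exists>b. \<not> cnf_val m l (\<sigma>(n := b)))"
proof -
  assume kn: "Suc k = n"
  then have "n - k = Suc 0" "odd k" using n_even by auto
  then show ?thesis unfolding qwin_def using kn by auto
qed

lemma last_round_value:
  assumes kn: "Suc k = n" and inv: "round_inv k \<sigma> E"
  shows "decides (qwin k \<sigma>) CC RR E (VG k)"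
  unfolding decides_def
proof (intro conjI impI)
  have k: "k < n" and E: "E \<subseteq> E0" using kn inv by (auto simp: round_inv_def)
  have clause: "decides (\<exists>t\<in>{1..3}. lit_val (\<sigma>(n := b)) (l j t)) CC RR
      (E - path_edges (gadget_path k b @ VG n # chain_path 1 j)) (VZ j)"
    if "1 \<le> j" "j \<le> m" for b j
    using clause_value[OF last_round_position[OF kn inv that]] .
  {
    assume "qwin k \<sigma>"
    then obtain b j where j: "1 \<le> j" "j \<le> m" "\<not> (\<exists>t\<in>{1..3}. lit_val (\<sigma>(n := b)) (l j t))"
      using qwin_last[OF kn] by (auto simp: cnf_val_def)
    show "wins CC RR E (VG k)"
      using win_later[OF last_round_move[OF kn inv j(1,2)]] clause[OF j(1,2)] j(3)
      by (auto simp: decides_def)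
  }
  {
    assume "\<not> qwin k \<sigma>"
    then have sat: "cnf_val m l (\<sigma>(n := b))" for b using qwin_last[OF kn] by auto
    show "loses CC RR E (VG k)"
    proof (rule lose)
      fix v p assume "is_move CC RR E (VG k) v p"
      with k E show "v \<notin> pointing RR E \<and> wins CC RR (E - path_edges p) v"
      proof (cases rule: round_moves)
        case (last b j)
        then show ?thesis using clause[of j b] sat[of b] by (auto simp: decides_def cnf_val_def)
      qed (use kn in simp)
    qed
  }
qed

lemma inner_round_value:
  assumes kn: "Suc k < n" and inv: "round_inv k \<sigma> E"
    and next_round: "\<And>b. decides (qwin (Suc k) (\<sigma>(Suc k := b))) CC RR
                              (E - path_edges (round_path k b)) (VG (Suc k))"
  shows "decides (qwin k \<sigma>) CC RR E (VG k)"
  unfolding decides_def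
proof (intro conjI impI)
  have k: "k < n" and E: "E \<subseteq> E0" using kn inv by (auto simp: round_inv_def)
  {
    assume "qwin k \<sigma>"
    then obtain b where "\<not> qwin (Suc k) (\<sigma>(Suc k := b))" using qwin_step[OF kn] by auto
    then show "wins CC RR E (VG k)"
      using win_later[OF round_move[OF kn inv]] next_round[of b] by (auto simp: decides_def)
  }
  {
    assume "\<not> qwin k \<sigma>"
    then have all: "qwin (Suc k) (\<sigma>(Suc k := b))" for b using qwin_step[OF kn] by auto
    show "loses CC RR E (VG k)"
    proof (rule lose)
      fix v p assume "is_move CC RR E (VG k) v p"
      with k E show "v \<notin> pointing RR E \<and> wins CC RR (E - path_edges p) v"
      proof (cases rule: round_moves)
        case (inner b)
        then show ?thesis using all[of b] next_round[of b] by (auto simp: decides_def)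
      qed (use kn in simp)
    qed
  }
qed

lemma round_value:
  assumes "k < n" "round_inv k \<sigma> E"
  shows "decides (qwin k \<sigma>) CC RR E (VG k)"
  using assms
proof (induction "n - k" arbitrary: k \<sigma> E rule: less_induct)
  case less
  show ?case
  proof (cases "Suc k < n")
    case True
    then show ?thesis
      using inner_round_value[OF True less.prems(2)] less.hyps[OF _ True round_inv_step[OF less.prems]]
      by simp
  next
    case False
    then show ?thesis using last_round_value less.prems by simp
  qed
qed

lemma start_value: "wins CC RR E0 (VG 0) \<longleftrightarrow> qbf_true n m l"
  using decides_wins_iff[OF round_value[OF _ round_inv_initial]] n_ge_2 qwin_initial by simp

end

theorem mainTheorem2:
  fixes n m :: nat and l :: "nat \<Rightarrow> nat \<Rightarrow> nat \<times> bool"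
  assumes "2 \<le> n" and "even n" and "1 \<le> m"
    and "\<forall>i\<in>{1..m}. \<forall>j\<in>{1..3}. fst (l i j) \<in> {1..n}"
  shows "exists_player_wins (red_edges n m) (red_C n m) red_s (red_R m l) \<longleftrightarrow> qbf_true n m l"
proof -
  interpret reduction n m l using assms by unfold_locales
  show ?thesis using start_value by (simp add: exists_player_wins_def red_s_def)
qed

end
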